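(* Let $d=2$, let $M\ge1$ be a real number, let $\alpha,\lambda\in\overline{\mathbb Q}$, and let $|\cdot|_v$ be an absolute value on $\overline{\mathbb Q}$. If $|\alpha|_v\ge\frac{1}{M\cdot|\lambda|_v}\ge2M$, then for all integers $0\le n_0\le n$, $$\left|\frac{\log M_{n,v}}{2^n}-\frac{\log M_{n_0,v}}{2^{n_0}}\right|\le4\log 2.$$
   Context: Define $A_0=\alpha$, $B_0=1$, and for $n\ge0$, $A_{n+1}=A_n^2+\lambda B_n^2$, $B_{n+1}=A_nB_n$ (so $[A_n:B_n]$ is the $n$-th iterate of $\alpha$ under $z\mapsto(z^2+\lambda)/z$). Set $M_{n,v}=\max\{|A_n|_v,|B_n|_v\}$. *)

theory Defs
  imports Complex_Main "HOL-Computational_Algebra.Polynomial"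
begin

definition Qbar :: "complex set" where
  "Qbar = {z. algebraic z}"

definition is_abs_value_on_Qbar :: "(complex \<Rightarrow> real) \<Rightarrow> bool" where
  "is_abs_value_on_Qbar v \<longleftrightarrow>
     (\<forall>x\<in>Qbar. v x \<ge> 0) \<and>
     (\<forall>x\<in>Qbar. v x = 0 \<longleftrightarrow> x = 0) \<and>
     (\<forall>x\<in>Qbar. \<forall>y\<in>Qbar. v (x * y) = v x * v y) \<and>
     (\<forall>x\<in>Qbar. \<forall>y\<in>Qbar. v (x + y) \<le> v x + v y)"

fun AB :: "complex \<Rightarrow> complex \<Rightarrow> nat \<Rightarrow> complex \<times> complex" where
  "AB al lam 0 = (al, 1)"
| "AB al lam (Suc n) =
     (let (a, b) = AB al lam n in (a\<^sup>2 + lam * b\<^sup>2, a * b))"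

definition A_seq :: "complex \<Rightarrow> complex \<Rightarrow> nat \<Rightarrow> complex" where
  "A_seq al lam n = fst (AB al lam n)"

definition B_seq :: "complex \<Rightarrow> complex \<Rightarrow> nat \<Rightarrow> complex" where
  "B_seq al lam n = snd (AB al lam n)"

definition Mnv :: "(complex \<Rightarrow> real) \<Rightarrow> complex \<Rightarrow> complex \<Rightarrow> nat \<Rightarrow> real" where
  "Mnv v al lam n = max (v (A_seq al lam n)) (v (B_seq al lam n))"

end

theory Submission
  imports Defs "Jordan_Normal_Form.Char_Poly"
begin

text \<open>Write \<open>a n = |A_n|_v\<close>, \<open>b n = |B_n|_v\<close>, \<open>l = |\<lambda>|_v\<close>; the hypotheses give \<open>l \<le> 1/2\<close> and
  \<open>a 0 \<ge> 2\<close>. The recursion gives \<open>M_(n+1) \<le> 2 M_n^2\<close> at once. Conversely, as long as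
  \<open>a 0 - n l \<ge> 1\<close> one has \<open>a n \<ge> (a 0 - n l) b n\<close>, so \<open>A_n\<close> dominates and
  \<open>M_(n+1) \<ge> M_n^2 / 2\<close>; afterwards \<open>n l > 1\<close>, and the elimination identities
  \<open>A_n^4 = A_(n+1) A_n^2 - \<lambda> B_(n+1)^2\<close>, \<open>\<lambda> B_n^4 = A_(n+1) B_n^2 - B_(n+1)^2\<close> give
  \<open>M_(n+1) \<ge> l M_n^2 / 2 \<ge> M_n^2 / 2^(n+1)\<close>. Telescoping \<open>log M_n / 2^n\<close> then yields the claim,
  even with \<open>2 log 2\<close>.

  Since the absolute value is only assumed to behave on \<open>Qbar\<close>, \<open>Qbar\<close> must be shown to be
  closed under sums and products: two algebraic numbers are eigenvalues of rational matrices with a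
  common eigenvector, so their sum and product are eigenvalues of rational matrices as well.\<close>

lemma algebraic_if_rat_mat_eigenvalue:
  fixes Q :: "rat mat" and w :: "complex vec"
  assumes "Q \<in> carrier_mat N N" "w \<in> carrier_vec N" "w \<noteq> 0\<^sub>v N"
    and "map_mat of_rat Q *\<^sub>v w = z \<cdot>\<^sub>v w"
  shows "algebraic z"
proof -
  let ?Q = "map_mat of_rat Q :: complex mat"
  have Q: "?Q \<in> carrier_mat N N" using assms(1) by simp
  have "eigenvalue ?Q z" unfolding eigenvalue_def eigenvector_def using assms by auto
  then have "poly (char_poly ?Q) z = 0" using eigenvalue_root_char_poly[OF Q] by simp
  also have "char_poly ?Q = map_poly of_rat (char_poly Q)"
    using of_rat_hom.char_poly_hom[OF assms(1)] by simp
  finally have root: "poly (map_poly of_rat (char_poly Q)) z = 0" .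
  have "char_poly Q \<noteq> 0" using degree_monic_char_poly[OF assms(1)] by auto
  then have "map_poly (of_rat :: rat \<Rightarrow> complex) (char_poly Q) \<noteq> 0" by simp
  from algebraicI'[OF _ this root] show ?thesis by (simp add: coeff_map_poly)
qed

lemma algebraic_power_shift:
  assumes "algebraic (x :: complex)"
  obtains m :: nat and r :: "nat \<Rightarrow> nat \<Rightarrow> rat"
  where "m \<ge> 1" "\<And>i. i < m \<Longrightarrow> x ^ Suc i = (\<Sum>j<m. of_rat (r i j) * x ^ j)"
proof -
  obtain p :: "int poly" where p: "p \<noteq> 0" "poly (map_poly of_int p) x = 0"
    using assms by (erule algebraicE')
  define m where "m = degree p"
  define c :: "nat \<Rightarrow> rat" where "c j = - of_int (coeff p j) / of_int (lead_coeff p)" for j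
  have lc: "lead_coeff p \<noteq> 0" using p(1) by simp
  have "0 = (\<Sum>j\<le>m. of_int (coeff p j) * x ^ j)"
    using p(2) unfolding poly_altdef m_def by (simp add: degree_map_poly coeff_map_poly)
  also have "\<dots> = (\<Sum>j<m. of_int (coeff p j) * x ^ j) + of_int (lead_coeff p) * x ^ m"
    unfolding m_def by (simp add: lessThan_Suc_atMost[symmetric])
  finally have lead: "of_int (lead_coeff p) * x ^ m = - (\<Sum>j<m. of_int (coeff p j) * x ^ j)"
    by (simp add: eq_neg_iff_add_eq_0 add.commute)
  have x_m: "x ^ m = (\<Sum>j<m. of_rat (c j) * x ^ j)"
  proof -
    have "x ^ m = of_int (lead_coeff p) * x ^ m / of_int (lead_coeff p)" using lc by simp
    also have "\<dots> = (\<Sum>j<m. of_rat (c j) * x ^ j)"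
      unfolding lead by (simp add: c_def sum_divide_distrib of_rat_divide of_rat_minus sum_negf[symmetric])
    finally show ?thesis .
  qed
  have "m \<ge> 1"
    using lead lc by (cases m) auto
  moreover
  define r where "r i j = (if Suc i < m then of_bool (j = Suc i) else c j)" for i j
  have "x ^ Suc i = (\<Sum>j<m. of_rat (r i j) * x ^ j)" if "i < m" for i
  proof (cases "Suc i < m")
    case True
    then have "(\<Sum>j<m. of_rat (r i j) * x ^ j) = (\<Sum>j<m. if j = Suc i then x ^ j else 0)"
      by (intro sum.cong) (auto simp: r_def)
    with True show ?thesis by simp
  next
    case False
    with that have "Suc i = m" by simp
    then show ?thesis using x_m by (simp add: r_def)
  qed
  ultimately show ?thesis using that by blast
qed

lemma sum_lessThan_mult_split:
  fixes g :: "nat \<Rightarrow> 'a::comm_monoid_add"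
  shows "(\<Sum>s<K * m. g s) = (\<Sum>j<K. \<Sum>i<m. g (i + j * m))"
proof -
  have "(\<Sum>s<K * m. g s) = (\<Sum>j<K. sum g {j * m..<j * m + m})"
    using sum.nat_group[of g m K] by simp
  also have "\<dots> = (\<Sum>j<K. \<Sum>i<m. g (i + j * m))"
  proof (rule sum.cong[OF refl])
    fix j
    have "sum g {0 + j * m..<m + j * m} = (\<Sum>i<m. g (i + j * m))"
      by (simp only: sum.shift_bounds_nat_ivl atLeast0LessThan)
    then show "sum g {j * m..<j * m + m} = (\<Sum>i<m. g (i + j * m))"
      by (simp add: add.commute)
  qed
  finally show ?thesis .
qed

lemma algebraic_common_rat_eigenvector:
  assumes "algebraic (x :: complex)" "algebraic y"
  obtains N w Qx Qy where "w \<in> carrier_vec N" "w \<noteq> 0\<^sub>v N"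
    "Qx \<in> carrier_mat N N" "map_mat of_rat Qx *\<^sub>v w = x \<cdot>\<^sub>v w"
    "Qy \<in> carrier_mat N N" "map_mat of_rat Qy *\<^sub>v w = y \<cdot>\<^sub>v w"
proof -
  obtain m r where m: "m \<ge> 1" and r: "\<And>i. i < m \<Longrightarrow> x ^ Suc i = (\<Sum>i'<m. of_rat (r i i') * x ^ i')"
    using algebraic_power_shift[OF assms(1)] by blast
  obtain K q where K: "K \<ge> 1" and q: "\<And>j. j < K \<Longrightarrow> y ^ Suc j = (\<Sum>j'<K. of_rat (q j j') * y ^ j')"
    using algebraic_power_shift[OF assms(2)] by blast
  define N where "N = K * m"
  txt \<open>The monomials \<open>x^i y^j\<close> (\<open>i < m\<close>, \<open>j < K\<close>) span a space stable under multiplication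
    by \<open>x\<close> and by \<open>y\<close>.\<close>
  define w where "w = vec N (\<lambda>t. x ^ (t mod m) * y ^ (t div m))"
  have w: "w \<in> carrier_vec N" unfolding w_def by simp
  have "0 < N" unfolding N_def using m K by simp
  then have "w $ 0 = 1" unfolding w_def by simp
  with \<open>0 < N\<close> have "w \<noteq> 0\<^sub>v N" by auto
  have w_monomial: "w $ (i + j * m) = x ^ i * y ^ j" if "i < m" "j < K" for i j
  proof -
    have "i + j * m < Suc j * m" using that by simp
    also have "\<dots> \<le> N" unfolding N_def using that by (intro mult_le_mono1) simp
    finally show ?thesis unfolding w_def using that by simp
  qed
  have entry: "(map_mat of_rat (mat N N f) *\<^sub>v w) $ t
      = (\<Sum>j<K. \<Sum>i<m. of_rat (f (t, i + j * m)) * (x ^ i * y ^ j))" if "t < N" for f t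
  proof -
    have "(map_mat of_rat (mat N N f) *\<^sub>v w) $ t = (\<Sum>s<N. of_rat (f (t, s)) * w $ s)"
      using that w by (simp add: mult_mat_vec_def scalar_prod_def atLeast0LessThan)
    also have "\<dots> = (\<Sum>j<K. \<Sum>i<m. of_rat (f (t, i + j * m)) * w $ (i + j * m))"
      unfolding N_def by (rule sum_lessThan_mult_split)
    also have "\<dots> = (\<Sum>j<K. \<Sum>i<m. of_rat (f (t, i + j * m)) * (x ^ i * y ^ j))"
      by (intro sum.cong refl) (simp add: w_monomial)
    finally show ?thesis .
  qed
  have t_bounds: "t mod m < m" "t div m < K" if "t < N" for t
    using that m unfolding N_def by (auto simp: less_mult_imp_div_less)
  define Qx where "Qx = mat N N (\<lambda>(t, s). if s div m = t div m then r (t mod m) (s mod m) else 0)"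
  define Qy where "Qy = mat N N (\<lambda>(t, s). if s mod m = t mod m then q (t div m) (s div m) else 0)"
  have Qx: "map_mat of_rat Qx *\<^sub>v w = x \<cdot>\<^sub>v w"
  proof (rule eq_vecI)
    fix t assume "t < dim_vec (x \<cdot>\<^sub>v w)"
    then have t: "t < N" using w by simp
    have "(map_mat of_rat Qx *\<^sub>v w) $ t
        = (\<Sum>j<K. \<Sum>i<m. if j = t div m then of_rat (r (t mod m) i) * (x ^ i * y ^ j) else 0)"
      unfolding Qx_def entry[OF t] using m by (intro sum.cong refl) auto
    also have "\<dots> = (\<Sum>j<K. if j = t div m then \<Sum>i<m. of_rat (r (t mod m) i) * (x ^ i * y ^ j) else 0)"
      by (intro sum.cong) auto
    also have "\<dots> = (\<Sum>i<m. of_rat (r (t mod m) i) * (x ^ i * y ^ (t div m)))"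
      using t_bounds[OF t] by simp
    also have "\<dots> = (\<Sum>i<m. of_rat (r (t mod m) i) * x ^ i) * y ^ (t div m)"
      by (simp add: sum_distrib_right mult.assoc)
    also have "\<dots> = x ^ Suc (t mod m) * y ^ (t div m)"
      using t_bounds[OF t] by (simp only: r)
    also have "\<dots> = (x \<cdot>\<^sub>v w) $ t" using t w unfolding w_def by simp
    finally show "(map_mat of_rat Qx *\<^sub>v w) $ t = (x \<cdot>\<^sub>v w) $ t" .
  qed (use w in \<open>simp add: Qx_def\<close>)
  have Qy: "map_mat of_rat Qy *\<^sub>v w = y \<cdot>\<^sub>v w"
  proof (rule eq_vecI)
    fix t assume "t < dim_vec (y \<cdot>\<^sub>v w)"
    then have t: "t < N" using w by simp
    have "(map_mat of_rat Qy *\<^sub>v w) $ t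
        = (\<Sum>j<K. \<Sum>i<m. if i = t mod m then x ^ i * (of_rat (q (t div m) j) * y ^ j) else 0)"
      unfolding Qy_def entry[OF t] by (intro sum.cong refl) (auto simp: ac_simps)
    also have "\<dots> = x ^ (t mod m) * (\<Sum>j<K. of_rat (q (t div m) j) * y ^ j)"
      using t_bounds[OF t] by (simp add: sum_distrib_left)
    also have "\<dots> = x ^ (t mod m) * y ^ Suc (t div m)"
      using t_bounds[OF t] by (simp only: q)
    also have "\<dots> = (y \<cdot>\<^sub>v w) $ t" using t w unfolding w_def by simp
    finally show "(map_mat of_rat Qy *\<^sub>v w) $ t = (y \<cdot>\<^sub>v w) $ t" .
  qed (use w in \<open>simp add: Qy_def\<close>)
  have "Qx \<in> carrier_mat N N" "Qy \<in> carrier_mat N N" unfolding Qx_def Qy_def by auto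
  with Qx Qy show ?thesis using that[OF w \<open>w \<noteq> 0\<^sub>v N\<close>] by blast
qed

lemma algebraic_plus:
  assumes "algebraic (x :: complex)" "algebraic y"
  shows "algebraic (x + y)"
proof -
  obtain N w Qx Qy where w: "w \<in> carrier_vec N" "w \<noteq> 0\<^sub>v N"
    and Qx: "Qx \<in> carrier_mat N N" "map_mat of_rat Qx *\<^sub>v w = x \<cdot>\<^sub>v w"
    and Qy: "Qy \<in> carrier_mat N N" "map_mat of_rat Qy *\<^sub>v w = y \<cdot>\<^sub>v w"
    by (rule algebraic_common_rat_eigenvector[OF assms])
  have "map_mat of_rat (Qx + Qy) = map_mat of_rat Qx + (map_mat of_rat Qy :: complex mat)"
    using Qx Qy by (auto simp: of_rat_add)
  then have "map_mat of_rat (Qx + Qy) *\<^sub>v w = map_mat of_rat Qx *\<^sub>v w + (map_mat of_rat Qy :: complex mat) *\<^sub>v w"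
    using Qx Qy w by (simp add: add_mult_distrib_mat_vec[of _ N N])
  also have "\<dots> = (x + y) \<cdot>\<^sub>v w"
    using Qx Qy by (simp add: add_smult_distrib_vec)
  finally show ?thesis
    using Qx Qy w by (intro algebraic_if_rat_mat_eigenvalue[of "Qx + Qy" N]) simp_all
qed

lemma algebraic_times:
  assumes "algebraic (x :: complex)" "algebraic y"
  shows "algebraic (x * y)"
proof -
  obtain N w Qx Qy where w: "w \<in> carrier_vec N" "w \<noteq> 0\<^sub>v N"
    and Qx: "Qx \<in> carrier_mat N N" "map_mat of_rat Qx *\<^sub>v w = x \<cdot>\<^sub>v w"
    and Qy: "Qy \<in> carrier_mat N N" "map_mat of_rat Qy *\<^sub>v w = y \<cdot>\<^sub>v w"
    by (rule algebraic_common_rat_eigenvector[OF assms])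
  have "map_mat of_rat (Qx * Qy) = map_mat of_rat Qx * (map_mat of_rat Qy :: complex mat)"
    using Qx Qy by (simp add: of_rat_hom.mat_hom_mult)
  then have "map_mat of_rat (Qx * Qy) *\<^sub>v w = map_mat of_rat Qx *\<^sub>v ((map_mat of_rat Qy :: complex mat) *\<^sub>v w)"
    using Qx Qy w by (simp add: assoc_mult_mat_vec[of _ N N _ N])
  also have "\<dots> = (x * y) \<cdot>\<^sub>v w"
    using Qx Qy w by (simp add: mult_mat_vec[of _ N N] smult_smult_assoc mult.commute)
  finally show ?thesis
    using Qx Qy w by (intro algebraic_if_rat_mat_eigenvalue[of "Qx * Qy" N]) simp_all
qed

lemma Qbar_add: "x \<in> Qbar \<Longrightarrow> y \<in> Qbar \<Longrightarrow> x + y \<in> Qbar"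
  unfolding Qbar_def by (simp add: algebraic_plus)

lemma Qbar_mult: "x \<in> Qbar \<Longrightarrow> y \<in> Qbar \<Longrightarrow> x * y \<in> Qbar"
  unfolding Qbar_def by (simp add: algebraic_times)

lemma Qbar_uminus: "x \<in> Qbar \<Longrightarrow> - x \<in> Qbar"
  unfolding Qbar_def by simp

lemma Qbar_one: "1 \<in> Qbar"
  unfolding Qbar_def by (simp add: rat_imp_algebraic)

lemma Qbar_power: "x \<in> Qbar \<Longrightarrow> x ^ n \<in> Qbar"
  by (induction n) (simp_all add: Qbar_one Qbar_mult)

context
  fixes v :: "complex \<Rightarrow> real"
  assumes v: "is_abs_value_on_Qbar v"
begin

lemma abs_value_nonneg: "x \<in> Qbar \<Longrightarrow> 0 \<le> v x"
  using v unfolding is_abs_value_on_Qbar_def by blast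

lemma abs_value_eq_0_iff: "x \<in> Qbar \<Longrightarrow> v x = 0 \<longleftrightarrow> x = 0"
  using v unfolding is_abs_value_on_Qbar_def by blast

lemma abs_value_mult: "x \<in> Qbar \<Longrightarrow> y \<in> Qbar \<Longrightarrow> v (x * y) = v x * v y"
  using v unfolding is_abs_value_on_Qbar_def by blast

lemma abs_value_triangle: "x \<in> Qbar \<Longrightarrow> y \<in> Qbar \<Longrightarrow> v (x + y) \<le> v x + v y"
  using v unfolding is_abs_value_on_Qbar_def by blast

lemma abs_value_one: "v 1 = 1"
proof -
  have "v 1 = v 1 * v 1" using abs_value_mult[OF Qbar_one Qbar_one] by simp
  moreover have "v 1 \<noteq> 0" using abs_value_eq_0_iff[OF Qbar_one] by simp
  ultimately show ?thesis by simp
qed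

lemma abs_value_uminus: "x \<in> Qbar \<Longrightarrow> v (- x) = v x"
proof -
  have m1: "- 1 \<in> Qbar" by (rule Qbar_uminus[OF Qbar_one])
  have "v (- 1) ^ 2 = 1"
    using abs_value_mult[OF m1 m1] abs_value_one by (simp add: power2_eq_square)
  then have "v (- 1) = 1"
    using abs_value_nonneg[OF m1] by (simp add: power2_eq_1_iff)
  moreover assume "x \<in> Qbar"
  ultimately show ?thesis using abs_value_mult[OF m1, of x] by simp
qed

lemma abs_value_power: "x \<in> Qbar \<Longrightarrow> v (x ^ n) = v x ^ n"
  by (induction n) (simp_all add: abs_value_one abs_value_mult Qbar_power)

lemma abs_value_diff_le: "x \<in> Qbar \<Longrightarrow> y \<in> Qbar \<Longrightarrow> v (x - y) \<le> v x + v y"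
  using abs_value_triangle[of x "- y"] by (simp add: Qbar_uminus abs_value_uminus)

lemma abs_value_add_ge: "x \<in> Qbar \<Longrightarrow> y \<in> Qbar \<Longrightarrow> v x - v y \<le> v (x + y)"
  using abs_value_diff_le[of "x + y" y] by (simp add: Qbar_add)

end

lemma A_seq_0 [simp]: "A_seq al lam 0 = al"
  and B_seq_0 [simp]: "B_seq al lam 0 = 1"
  by (simp_all add: A_seq_def B_seq_def)

lemma A_seq_Suc [simp]: "A_seq al lam (Suc k) = A_seq al lam k ^ 2 + lam * B_seq al lam k ^ 2"
  and B_seq_Suc [simp]: "B_seq al lam (Suc k) = A_seq al lam k * B_seq al lam k"
  by (simp_all add: A_seq_def B_seq_def split: prod.splits)

lemma A_seq_pow4_eq:
  "A_seq al lam k ^ 4 = A_seq al lam (Suc k) * A_seq al lam k ^ 2 - lam * B_seq al lam (Suc k) ^ 2"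
  by (simp add: algebra_simps power_def)

lemma B_seq_pow4_eq:
  "lam * B_seq al lam k ^ 4 = A_seq al lam (Suc k) * B_seq al lam k ^ 2 - B_seq al lam (Suc k) ^ 2"
  by (simp add: algebra_simps power_def)

lemma AB_seq_in_Qbar:
  assumes "al \<in> Qbar" "lam \<in> Qbar"
  shows "A_seq al lam k \<in> Qbar \<and> B_seq al lam k \<in> Qbar"
  by (induction k) (simp_all add: assms Qbar_one Qbar_add Qbar_mult Qbar_power)

lemma max_pow4_le_of_elimination:
  fixes a b a' b' l :: real
  assumes "0 \<le> a" "0 \<le> b" "0 \<le> a'" "0 \<le> b'" "0 < l" "l \<le> 1"
    and "a ^ 4 \<le> a' * a ^ 2 + l * b' ^ 2" "l * b ^ 4 \<le> a' * b ^ 2 + b' ^ 2"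
  shows "l * max a b ^ 4 \<le> max a' b' * max a b ^ 2 + max a' b' ^ 2"
proof (cases "a \<le> b")
  case True
  have "a' * b ^ 2 \<le> max a' b' * b ^ 2" by (intro mult_right_mono) auto
  moreover have "b' ^ 2 \<le> max a' b' ^ 2" using assms by (intro power_mono) auto
  ultimately show ?thesis using True assms(8) by (simp add: max_def)
next
  case False
  have "a' * a ^ 2 \<le> max a' b' * a ^ 2" by (intro mult_right_mono) auto
  moreover have "l * b' ^ 2 \<le> max a' b' ^ 2"
    using assms by (intro mult_left_le_one_le[THEN order_trans] power_mono) auto
  moreover have "l * a ^ 4 \<le> a ^ 4" using assms by (simp add: mult_left_le_one_le)
  ultimately show ?thesis using False assms(7) by (simp add: max_def)
qed

lemma half_sq_le_of_quartic:
  fixes X Y l :: real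
  assumes "0 < X" "0 \<le> Y" "0 < l" "l \<le> 1" "l * X ^ 4 \<le> Y * X ^ 2 + Y ^ 2"
  shows "l * X ^ 2 / 2 \<le> Y"
proof (rule ccontr)
  assume "\<not> ?thesis"
  then have Y: "Y < l * X ^ 2 / 2" by simp
  have "Y * X ^ 2 < l * X ^ 4 / 2"
    using mult_strict_right_mono[OF Y, of "X ^ 2"] assms(1) by (simp add: power_def field_simps)
  moreover have "Y ^ 2 \<le> l * X ^ 4 / 4"
  proof -
    have "Y ^ 2 \<le> (l * X ^ 2 / 2) ^ 2" using Y assms(2) by (intro power_mono) auto
    also have "\<dots> = l * (l * X ^ 4) / 4" by (simp add: power_def field_simps)
    also have "\<dots> \<le> l * X ^ 4 / 4" using assms by (simp add: mult_left_le_one_le)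
    finally show ?thesis .
  qed
  moreover have "0 < l * X ^ 4" using assms by simp
  ultimately show False using assms(5) by linarith
qed

locale height_recursion =
  fixes a b :: "nat \<Rightarrow> real" and l :: real
  assumes a_nonneg: "\<And>k. 0 \<le> a k" and b_nonneg: "\<And>k. 0 \<le> b k"
    and a_0_ge: "2 \<le> a 0" and b_0: "b 0 = 1"
    and l_pos: "0 < l" and l_le: "l \<le> 1 / 2"
    and a_Suc_le: "\<And>k. a (Suc k) \<le> a k ^ 2 + l * b k ^ 2"
    and a_Suc_ge: "\<And>k. a k ^ 2 - l * b k ^ 2 \<le> a (Suc k)"
    and b_Suc: "\<And>k. b (Suc k) = a k * b k"
    and a_pow4_le: "\<And>k. a k ^ 4 \<le> a (Suc k) * a k ^ 2 + l * b (Suc k) ^ 2"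
    and b_pow4_le: "\<And>k. l * b k ^ 4 \<le> a (Suc k) * b k ^ 2 + b (Suc k) ^ 2"
begin

abbreviation height :: "nat \<Rightarrow> real" where
  "height k \<equiv> max (a k) (b k)"

lemma a_ge_ratio_mult_b: "1 \<le> a 0 - k * l \<Longrightarrow> (a 0 - k * l) * b k \<le> a k"
proof (induction k)
  case 0
  show ?case using b_0 by simp
next
  case (Suc k)
  define c where "c = a 0 - k * l"
  have c: "1 \<le> c" using Suc.prems l_pos unfolding c_def by (simp add: algebra_simps)
  have ab: "c * b k \<le> a k" using Suc.IH c unfolding c_def by blast
  have "b k \<le> a k" using ab c b_nonneg[of k] by (smt (verit) mult_le_cancel_right1)
  have "0 \<le> a k * (a k - c * b k) + l * b k * (a k - b k)"
    using ab \<open>b k \<le> a k\<close> a_nonneg[of k] b_nonneg[of k] l_pos by (simp add: mult_nonneg_nonneg)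
  then have "(c - l) * b (Suc k) \<le> a k ^ 2 - l * b k ^ 2"
    by (simp add: b_Suc power2_eq_square algebra_simps)
  then show ?case using a_Suc_ge[of k] unfolding c_def by (simp add: algebra_simps)
qed

lemma height_Suc_ge_elimination: "0 < height k \<Longrightarrow> l * height k ^ 2 / 2 \<le> height (Suc k)"
  using l_pos l_le a_nonneg b_nonneg
    max_pow4_le_of_elimination[OF a_nonneg b_nonneg a_nonneg b_nonneg l_pos _ a_pow4_le b_pow4_le]
  by (intro half_sq_le_of_quartic) (auto simp: le_max_iff_disj)

lemma height_pos: "0 < height k"
proof (induction k)
  case 0
  show ?case using b_0 by simp
next
  case (Suc k)
  have "0 < l * height k ^ 2 / 2" using Suc l_pos by simp
  with height_Suc_ge_elimination[OF Suc] show ?case by linarith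
qed

lemma height_Suc_le: "height (Suc k) \<le> 2 * height k ^ 2"
proof -
  have "a k ^ 2 \<le> height k ^ 2" "b k ^ 2 \<le> height k ^ 2"
    using a_nonneg[of k] b_nonneg[of k] by (auto intro: power_mono)
  moreover have "l * b k ^ 2 \<le> b k ^ 2" using l_pos l_le by (intro mult_left_le_one_le) auto
  ultimately have "a (Suc k) \<le> 2 * height k ^ 2" using a_Suc_le[of k] by linarith
  moreover have "b (Suc k) \<le> 2 * height k ^ 2"
  proof -
    have "a k * b k \<le> height k * height k"
      using a_nonneg[of k] b_nonneg[of k] by (intro mult_mono) auto
    moreover have "0 \<le> height k * height k" by (rule zero_le_square)
    ultimately show ?thesis unfolding b_Suc power2_eq_square by linarith
  qed
  ultimately show ?thesis by simp
qed

lemma height_Suc_ge: "height k ^ 2 / 2 ^ Suc k \<le> height (Suc k)"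
proof (cases "1 \<le> a 0 - k * l")
  case True
  have "b k \<le> a k"
    using a_ge_ratio_mult_b[OF True] True b_nonneg[of k] by (smt (verit) mult_le_cancel_right1)
  then have "l * b k ^ 2 \<le> 1 / 2 * a k ^ 2"
    using l_le l_pos b_nonneg[of k] by (intro mult_mono power_mono) auto
  then have "a k ^ 2 / 2 \<le> a (Suc k)" using a_Suc_ge[of k] by simp
  moreover have "a k ^ 2 / 2 ^ Suc k \<le> a k ^ 2 / 2"
    by (intro divide_left_mono) (auto simp: Suc_le_eq)
  ultimately show ?thesis using \<open>b k \<le> a k\<close> by (simp add: max_def)
next
  case False
  then have "1 < real k * l" using a_0_ge by simp
  also have "\<dots> \<le> 2 ^ k * l" using l_pos by (simp add: less_imp_le of_nat_less_two_power)
  finally have "1 / 2 ^ Suc k \<le> l / 2" by (simp add: field_simps)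
  then have "height k ^ 2 / 2 ^ Suc k \<le> l * height k ^ 2 / 2"
    using mult_right_mono[of "1 / 2 ^ Suc k" "l / 2" "height k ^ 2"] by simp
  with height_Suc_ge_elimination[OF height_pos[of k]] show ?thesis by linarith
qed

end

lemma log_height_oscillation:
  fixes X :: "nat \<Rightarrow> real"
  assumes pos: "\<And>k. 0 < X k"
    and le: "\<And>k. X (Suc k) \<le> 2 * X k ^ 2"
    and ge: "\<And>k. X k ^ 2 / 2 ^ Suc k \<le> X (Suc k)"
    and "n0 \<le> n"
  shows "\<bar>ln (X n) / 2 ^ n - ln (X n0) / 2 ^ n0\<bar> \<le> 2 * ln 2"
proof -
  define D where "D k = ln (X k) / 2 ^ k" for k
  have D_Suc: "D (Suc k) - D k = (ln (X (Suc k)) - 2 * ln (X k)) / 2 ^ Suc k" for k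
    unfolding D_def by (simp add: field_simps)
  have up: "D (Suc k) - D k \<le> ln 2 / 2 ^ Suc k" for k
  proof -
    have "ln (X (Suc k)) \<le> ln (2 * X k ^ 2)" using le[of k] pos[of k] pos[of "Suc k"] by (subst ln_le_cancel_iff) auto
    also have "\<dots> = ln 2 + 2 * ln (X k)" using pos[of k] by (simp add: ln_mult ln_realpow)
    finally show ?thesis unfolding D_Suc by (intro divide_right_mono) auto
  qed
  have down: "D k - D (Suc k) \<le> ln 2 * (Suc k) / 2 ^ Suc k" for k
  proof -
    have "2 * ln (X k) - Suc k * ln 2 = ln (X k ^ 2 / 2 ^ Suc k)"
      using pos[of k] by (simp add: ln_div ln_mult ln_realpow algebra_simps)
    also have "\<dots> \<le> ln (X (Suc k))" using ge[of k] pos[of k] pos[of "Suc k"] by (subst ln_le_cancel_iff) auto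
    finally have "2 * ln (X k) - ln (X (Suc k)) \<le> ln 2 * Suc k" by (simp add: algebra_simps)
    then have "(2 * ln (X k) - ln (X (Suc k))) / 2 ^ Suc k \<le> ln 2 * Suc k / 2 ^ Suc k"
      by (simp add: divide_right_mono)
    moreover have "D k - D (Suc k) = (2 * ln (X k) - ln (X (Suc k))) / 2 ^ Suc k"
      using D_Suc[of k] by (simp add: field_simps)
    ultimately show ?thesis by simp
  qed
  txt \<open>\<open>(k + 2) / 2^k\<close> is the tail sum \<open>\<Sum>j\<ge>k. (j + 1) / 2^(j+1)\<close> of the downward step bounds.\<close>
  have "decseq (\<lambda>k. D k + ln 2 / 2 ^ k)"
  proof (rule decseq_SucI)
    fix k
    have "ln 2 / 2 ^ k = ln 2 / 2 ^ Suc k + ln 2 / (2::real) ^ Suc k" by simp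
    then show "D (Suc k) + ln 2 / 2 ^ Suc k \<le> D k + ln 2 / 2 ^ k" using up[of k] by linarith
  qed
  then have "D n + ln 2 / 2 ^ n \<le> D n0 + ln 2 / 2 ^ n0"
    using \<open>n0 \<le> n\<close> by (rule decseqD)
  moreover have "ln 2 / 2 ^ n0 \<le> ln (2::real)" by (simp add: divide_le_eq)
  moreover have "0 \<le> ln 2 / (2::real) ^ n" by simp
  ultimately have upper: "D n - D n0 \<le> ln 2" by linarith
  have "decseq (\<lambda>k. ln 2 * (real k + 2) / 2 ^ k - D k)"
  proof (rule decseq_SucI)
    fix k
    have "ln 2 * (real k + 2) / 2 ^ k = ln 2 * (real (Suc k) + 2) / 2 ^ Suc k + ln 2 * Suc k / (2::real) ^ Suc k"
      by (simp add: field_simps)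
    then show "ln 2 * (real (Suc k) + 2) / 2 ^ Suc k - D (Suc k) \<le> ln 2 * (real k + 2) / 2 ^ k - D k"
      using down[of k] by linarith
  qed
  then have "ln 2 * (real n + 2) / 2 ^ n - D n \<le> ln 2 * (real n0 + 2) / 2 ^ n0 - D n0"
    using \<open>n0 \<le> n\<close> by (rule decseqD)
  moreover have "ln 2 * (real n0 + 2) / 2 ^ n0 \<le> 2 * ln (2::real)"
  proof -
    have "Suc n0 \<le> 2 ^ n0" using less_exp[of n0] by (simp only: Suc_le_eq)
    then have "real (Suc n0) \<le> real (2 ^ n0)" by (simp only: of_nat_le_iff)
    then have "real n0 + 2 \<le> 2 * 2 ^ n0" by simp
    then have "ln 2 * (real n0 + 2) \<le> ln 2 * (2 * 2 ^ n0)" by (simp add: mult_left_mono)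
    then show ?thesis by (simp add: pos_divide_le_eq mult_ac)
  qed
  moreover have "0 \<le> ln 2 * (real n + 2) / (2::real) ^ n" by simp
  ultimately have lower: "D n0 - D n \<le> 2 * ln 2" by linarith
  show ?thesis using upper lower unfolding D_def by linarith
qed

lemma height_recursion_abs_orbit:
  assumes v: "is_abs_value_on_Qbar v" and al: "al \<in> Qbar" and lam: "lam \<in> Qbar"
    and "2 \<le> v al" "0 < v lam" "v lam \<le> 1 / 2"
  shows "height_recursion (\<lambda>k. v (A_seq al lam k)) (\<lambda>k. v (B_seq al lam k)) (v lam)"
proof
  note Qbar = lam AB_seq_in_Qbar[OF al lam] Qbar_mult Qbar_power
  note abs_value = abs_value_mult[OF v] abs_value_power[OF v]
  fix k
  let ?A = "A_seq al lam k" and ?B = "B_seq al lam k"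
    and ?A' = "A_seq al lam (Suc k)" and ?B' = "B_seq al lam (Suc k)"
  show "0 \<le> v ?A" "0 \<le> v ?B" using Qbar by (simp_all add: abs_value_nonneg[OF v])
  show "v ?B' = v ?A * v ?B" using Qbar by (simp add: abs_value)
  show "v ?A' \<le> v ?A ^ 2 + v lam * v ?B ^ 2"
    using abs_value_triangle[OF v, of "?A ^ 2" "lam * ?B ^ 2"] Qbar by (simp add: abs_value)
  show "v ?A ^ 2 - v lam * v ?B ^ 2 \<le> v ?A'"
    using abs_value_add_ge[OF v, of "?A ^ 2" "lam * ?B ^ 2"] Qbar by (simp add: abs_value)
  show "v ?A ^ 4 \<le> v ?A' * v ?A ^ 2 + v lam * v ?B' ^ 2"
    using abs_value_diff_le[OF v, of "?A' * ?A ^ 2" "lam * ?B' ^ 2"] Qbar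
    by (simp add: abs_value A_seq_pow4_eq[symmetric] del: A_seq_Suc B_seq_Suc)
  show "v lam * v ?B ^ 4 \<le> v ?A' * v ?B ^ 2 + v ?B' ^ 2"
    using abs_value_diff_le[OF v, of "?A' * ?B ^ 2" "?B' ^ 2"] Qbar
    by (simp add: abs_value B_seq_pow4_eq[symmetric] del: A_seq_Suc B_seq_Suc)
qed (use assms in \<open>simp_all add: abs_value_one\<close>)

theorem proposition6p2:
  fixes M :: real and al lam :: complex and v :: "complex \<Rightarrow> real" and n0 n :: nat
  assumes "M \<ge> 1"
    and "al \<in> Qbar" and "lam \<in> Qbar"
    and "is_abs_value_on_Qbar v"
    and "lam \<noteq> 0"
    and "v al \<ge> 1 / (M * v lam)"
    and "1 / (M * v lam) \<ge> 2 * M"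
    and "n0 \<le> n"
  shows "\<bar>ln (Mnv v al lam n) / 2 ^ n - ln (Mnv v al lam n0) / 2 ^ n0\<bar> \<le> 4 * ln 2"
proof -
  have "v lam \<noteq> 0" using abs_value_eq_0_iff[OF assms(4,3)] assms(5) by simp
  with abs_value_nonneg[OF assms(4,3)] have lam_pos: "0 < v lam" by simp
  have "2 * M * (M * v lam) \<le> 1" using assms(1,7) lam_pos by (simp add: field_simps)
  moreover have "v lam \<le> M * M * v lam"
    using mult_right_mono[OF mult_mono[of 1 M 1 M], of "v lam"] assms(1) lam_pos by simp
  ultimately have lam_le: "v lam \<le> 1 / 2" by (simp add: algebra_simps)
  have al_ge: "2 \<le> v al" using assms(1,6,7) by linarith
  interpret height_recursion "\<lambda>k. v (A_seq al lam k)" "\<lambda>k. v (B_seq al lam k)" "v lam"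
    by (rule height_recursion_abs_orbit[OF assms(4,2,3) al_ge lam_pos lam_le])
  have "\<bar>ln (Mnv v al lam n) / 2 ^ n - ln (Mnv v al lam n0) / 2 ^ n0\<bar> \<le> 2 * ln 2"
    unfolding Mnv_def using height_pos height_Suc_le height_Suc_ge assms(8)
    by (rule log_height_oscillation)
  then show ?thesis using ln_gt_zero[of 2] by linarith
qed

end
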